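(* Let $m$ be a positive integer. There exists a bounded linear operator $L\colon\mathsf{D}(A_0^{2m})\to\mathsf{D}(A^{2m})$ such that $(Lf)(x)=f(x)$ for all $x\ge0$ and all $f\in\mathsf{D}(A_0^{2m})$, and $(Lf)(+\infty)=f(+\infty)$.
   Context: Fix $w>0$. $H(\mathbb{R})$ is the Hilbert space of absolutely continuous $f\in L^1_{\mathrm{loc}}(\mathbb{R})$ with $f'\in L^2(\mathbb{R},e^{wx}dx)$, with inner product $\langle f,g\rangle=f(+\infty)g(+\infty)+\int_\mathbb{R}f'g'e^{wx}dx$; $A f=f'$ on $\mathsf{D}(A)=\{f\in H(\mathbb{R}):f'\in H(\mathbb{R})\}$ generates the translation semigroup on $H(\mathbb{R})$. $H(\mathbb{R}_+)$ is defined analogously on $\mathbb{R}_+$ (inner product $f(+\infty)g(+\infty)+\int_0^\infty f'g'e^{wx}dx$) and $A_0f=f'$ on $\mathsf{D}(A_0)=\{f\in H(\mathbb{R}_+):f'\in H(\mathbb{R}_+)\}$. Domains of powers carry graph norms $\|f\|^2_{\mathsf{D}(A^k)}=\sum_{j\le k}\|A^jf\|^2$, and similarly for $A_0$. *)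

theory Defs
  imports "HOL-Analysis.Analysis"
begin

text \<open>Weighted spaces H(S), S = UNIV (the line) or {0..} (the half line), weight exp(w x).
  A function f (a genuine, continuous representative) has weak derivative g on S if g is
  locally absolutely integrable on S, f is the integral of g on S, and g is in L2(S, e^(wx) dx).\<close>

definition Hder :: "real \<Rightarrow> real set \<Rightarrow> (real \<Rightarrow> real) \<Rightarrow> (real \<Rightarrow> real) \<Rightarrow> bool" where
  "Hder w S f g \<longleftrightarrow>
     (\<forall>x\<in>S. \<forall>y\<in>S. x \<le> y \<longrightarrow> g absolutely_integrable_on {x..y} \<and> f y - f x = integral {x..y} g)
     \<and> (\<lambda>x. (g x)\<^sup>2 * exp (w * x)) integrable_on S"

definition Hsp :: "real \<Rightarrow> real set \<Rightarrow> (real \<Rightarrow> real) \<Rightarrow> bool" where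
  "Hsp w S f \<longleftrightarrow> (\<exists>g. Hder w S f g)"

text \<open>The generator A f = f' (choosing the representative lying in H when it exists,
  which is then unique on S, being continuous).\<close>
definition Aop :: "real \<Rightarrow> real set \<Rightarrow> (real \<Rightarrow> real) \<Rightarrow> (real \<Rightarrow> real)" where
  "Aop w S f = (if \<exists>g. Hder w S f g \<and> Hsp w S g then (SOME g. Hder w S f g \<and> Hsp w S g)
                else (SOME g. Hder w S f g))"

definition Hnorm2 :: "real \<Rightarrow> real set \<Rightarrow> (real \<Rightarrow> real) \<Rightarrow> real" where
  "Hnorm2 w S f = (Lim at_top f)\<^sup>2 + integral S (\<lambda>x. (Aop w S f x)\<^sup>2 * exp (w * x))"

definition Dom :: "real \<Rightarrow> real set \<Rightarrow> nat \<Rightarrow> (real \<Rightarrow> real) \<Rightarrow> bool" where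
  "Dom w S k f \<longleftrightarrow> (\<forall>j\<le>k. Hsp w S ((Aop w S ^^ j) f))"

definition gnorm :: "real \<Rightarrow> real set \<Rightarrow> nat \<Rightarrow> (real \<Rightarrow> real) \<Rightarrow> real" where
  "gnorm w S k f = sqrt (\<Sum>j\<le>k. Hnorm2 w S ((Aop w S ^^ j) f))"

end

theory Submission
  imports Defs
begin

text \<open>
  For \<open>x \<le> 0\<close> the extension continues \<open>f\<close> by its Taylor polynomial of degree \<open>n\<close> at \<open>0\<close>, whose
  coefficients are the boundary values \<open>(A\<^sub>0\<^sup>k f)(0)\<close>, \<open>k \<le> n\<close>. Derivatives of this polynomial are again
  such Taylor polynomials, matching \<open>A\<^sub>0\<^sup>j f\<close> at \<open>0\<close>, so the \<open>j\<close>-th weak derivative of the extension is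
  \<open>A\<^sub>0\<^sup>j f\<close> on the right and a polynomial on the left; polynomials are square integrable against
  \<open>e\<^sup>w\<^sup>x\<close> on the negative half line, so the extension lies in \<open>D(A\<^sup>n)\<close>. Its graph norm is controlled
  because every boundary value is: \<open>g(0) = g(+\<infinity>) - \<integral>\<^sub>0\<^sup>\<infinity> g'\<close> and, by Cauchy--Schwarz against the weight,
  \<open>(\<integral>\<^sub>0\<^sup>\<infinity> g')\<^sup>2 \<le> \<integral>\<^sub>0\<^sup>\<infinity> g'\<^sup>2 e\<^sup>w\<^sup>x / w\<close>. Linearity is inherited from the coefficients. The order \<open>2m\<close>
  may be any \<open>n\<close>.
\<close>

section \<open>Functions whose integrals over all intervals vanish\<close>

lemma AE_zero_if_integral_greaterThan_zero:
  fixes k :: "real \<Rightarrow> real"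
  assumes k: "integrable lborel k" and zero: "\<And>x. (\<integral>y. indicator {x<..} y * k y \<partial>lborel) = 0"
  shows "AE x in lborel. k x = 0"
proof -
  have [measurable]: "k \<in> borel_measurable borel" using k by auto
  have part_int: "integrable lborel (\<lambda>y. indicator A y * max (s * k y) 0)"
    if "A \<in> sets borel" for A and s :: real
    using integrable_mult_indicator[of A lborel "\<lambda>y. max (s * k y) 0"] that k by simp
  have nn_part: "(\<integral>\<^sup>+y. ennreal (s * k y) * indicator A y \<partial>lborel)
      = ennreal (\<integral>y. indicator A y * max (s * k y) 0 \<partial>lborel)" if "A \<in> sets borel" for A and s :: real
  proof -
    have "(\<integral>\<^sup>+y. ennreal (s * k y) * indicator A y \<partial>lborel)
        = (\<integral>\<^sup>+y. ennreal (indicator A y * max (s * k y) 0) \<partial>lborel)"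
      by (intro nn_integral_cong) (auto simp: indicator_def max_def ennreal_neg)
    also have "\<dots> = ennreal (\<integral>y. indicator A y * max (s * k y) 0 \<partial>lborel)"
      by (intro nn_integral_eq_integral part_int that) auto
    finally show ?thesis .
  qed
  have "density lborel (\<lambda>y. ennreal (k y)) = density lborel (\<lambda>y. ennreal (- k y))"
  proof (rule measure_eqI_lessThan)
    show "emeasure (density lborel (\<lambda>y. ennreal (k y))) {x<..} < \<infinity>" for x
      using nn_part[of "{x<..}" 1] by (simp add: emeasure_density)
    show "emeasure (density lborel (\<lambda>y. ennreal (k y))) {x<..}
        = emeasure (density lborel (\<lambda>y. ennreal (- k y))) {x<..}" for x
    proof -
      have "(\<integral>y. indicator {x<..} y * max (1 * k y) 0 \<partial>lborel)
          - (\<integral>y. indicator {x<..} y * max (-1 * k y) 0 \<partial>lborel)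
          = (\<integral>y. indicator {x<..} y * k y \<partial>lborel)"
        by (subst Bochner_Integration.integral_diff[symmetric, OF part_int part_int])
           (auto intro!: Bochner_Integration.integral_cong simp: indicator_def max_def)
      then show ?thesis
        using zero[of x] nn_part[of "{x<..}" 1] nn_part[of "{x<..}" "-1"] by (simp add: emeasure_density)
    qed
  qed auto
  moreover have "integral\<^sup>N lborel (\<lambda>y. ennreal (k y)) \<noteq> \<infinity>"
    using nn_part[of UNIV 1] by simp
  ultimately have "AE y in lborel. ennreal (k y) = ennreal (- k y)"
    by (subst (asm) finite_density_unique) auto
  then show ?thesis
    by eventually_elim (metis ennreal_eq_0_iff ennreal_neg linorder_le_cases neg_le_0_iff_le order_antisym)
qed

lemma AE_zero_if_integral_greaterThan_zero_lebesgue: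
  fixes k :: "real \<Rightarrow> real"
  assumes k: "integrable lebesgue k" and zero: "\<And>x. (\<integral>y. indicator {x<..} y * k y \<partial>lebesgue) = 0"
  shows "AE x in lebesgue. k x = 0"
proof -
  have kL: "k \<in> borel_measurable lebesgue" using k by auto
  then obtain g where g: "g \<in> borel_measurable lborel" and kg: "AE x in lborel. k x = g x"
    using completion_ex_borel_measurable_real by blast
  have kgL: "AE x in lebesgue. k x = g x" using kg by (rule AE_completion)
  have gL: "g \<in> borel_measurable lebesgue" using g by (rule measurable_completion)
  have "integrable lebesgue g"
    using k integrable_cong_AE[OF kL gL kgL] by simp
  then have g_int: "integrable lborel g" using integrable_completion[OF g] by simp
  have "(\<integral>y. indicator {x<..} y * g y \<partial>lborel) = 0" for x
  proof -
    have "(\<integral>y. indicator {x<..} y * g y \<partial>lborel) = (\<integral>y. indicator {x<..} y * g y \<partial>lebesgue)"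
      using g by (intro integral_completion[symmetric]) auto
    also have "\<dots> = (\<integral>y. indicator {x<..} y * k y \<partial>lebesgue)"
      by (rule integral_cong_AE) (use kgL gL kL in \<open>auto intro!: borel_measurable_times borel_measurable_indicator\<close>)
    finally show ?thesis using zero by simp
  qed
  then have "AE x in lborel. g x = 0" by (rule AE_zero_if_integral_greaterThan_zero[OF g_int])
  with kg have "AE x in lborel. k x = 0" by eventually_elim simp
  then show ?thesis by (rule AE_completion)
qed

lemma negligible_nonzero_if_interval_integrals_zero:
  fixes h :: "real \<Rightarrow> real"
  assumes int: "\<And>x y. x \<le> y \<Longrightarrow> h absolutely_integrable_on {x..y}"
    and zero: "\<And>x y. x \<le> y \<Longrightarrow> integral {x..y} h = 0"
  shows "negligible {x. h x \<noteq> 0}"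
proof -
  have zero_Ioi: "integral ({x<..} \<inter> {a..b}) h = 0" if "a \<le> b" for x a b
  proof -
    consider "x < a" | "a \<le> x" "x \<le> b" | "b < x" by linarith
    then show ?thesis
    proof cases
      case 1
      then have "{x<..} \<inter> {a..b} = {a..b}" by auto
      then show ?thesis using zero that by simp
    next
      case 2
      have "integral ({x<..} \<inter> {a..b}) h = integral {x..b} h"
        by (rule integral_spike_set; rule negligible_subset[of "{x}"]) (use 2 in auto)
      then show ?thesis using zero 2 by simp
    next
      case 3
      then have "{x<..} \<inter> {a..b} = {}" by auto
      then show ?thesis by simp
    qed
  qed
  have "AE x in lebesgue. indicator {-real n..real n} x * h x = 0" for n :: nat
  proof (rule AE_zero_if_integral_greaterThan_zero_lebesgue)
    have hn: "set_integrable lebesgue {-real n..real n} h" using int[of "-real n" "real n"] by simp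
    then show "integrable lebesgue (\<lambda>x. indicator {-real n..real n} x * h x)"
      unfolding set_integrable_def by simp
    fix x
    have "(\<integral>y. indicator {x<..} y * (indicator {-real n..real n} y * h y) \<partial>lebesgue)
        = (LINT y:({x<..} \<inter> {-real n..real n})|lebesgue. h y)"
      unfolding set_lebesgue_integral_def
      by (intro Bochner_Integration.integral_cong) (auto split: split_indicator)
    also have "\<dots> = integral ({x<..} \<inter> {-real n..real n}) h"
      by (rule set_lebesgue_integral_eq_integral(2)) (rule set_integrable_subset[OF hn]; auto)
    also have "\<dots> = 0" by (rule zero_Ioi) simp
    finally show "(\<integral>y. indicator {x<..} y * (indicator {-real n..real n} y * h y) \<partial>lebesgue) = 0" .
  qed
  then have "AE x in lebesgue. \<forall>n::nat. indicator {-real n..real n} x * h x = 0"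
    by (subst AE_all_countable) blast
  then have "AE x in lebesgue. h x = 0"
  proof eventually_elim
    case (elim x)
    obtain n :: nat where "\<bar>x\<bar> \<le> real n" using real_arch_simple by blast
    with elim[rule_format, of n] show ?case by (auto simp: abs_le_iff)
  qed
  then obtain N where "N \<in> null_sets lebesgue" "{x. h x \<noteq> 0} \<subseteq> N"
    by (force simp: eventually_ae_filter)
  then show ?thesis by (metis negligible_iff_null_sets negligible_subset)
qed

lemma Hder_cong: "(\<And>x. x \<in> S \<Longrightarrow> f x = f' x) \<Longrightarrow> Hder w S f = Hder w S f'"
  unfolding Hder_def by (intro ext) auto

lemma Aop_cong:
  assumes "\<And>x. x \<in> S \<Longrightarrow> f x = f' x"
  shows "Aop w S f = Aop w S f'"
proof -
  have eq: "Hder w S f = Hder w S f'" using Hder_cong[of S f f' w] assms by blast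
  show ?thesis unfolding Aop_def eq ..
qed

lemma Aop_Hder: assumes "Hsp w S f" shows "Hder w S f (Aop w S f)"
proof (cases "\<exists>g. Hder w S f g \<and> Hsp w S g")
  case True
  then show ?thesis unfolding Aop_def using someI_ex[OF True] by simp
next
  case False
  have ex: "\<exists>g. Hder w S f g" using assms unfolding Hsp_def .
  show ?thesis unfolding Aop_def using False someI_ex[OF ex] by auto
qed

lemma Aop_Hder_Hsp:
  assumes "Hder w S f g" "Hsp w S g"
  shows "Hder w S f (Aop w S f)" "Hsp w S (Aop w S f)"
proof -
  have ex: "\<exists>g. Hder w S f g \<and> Hsp w S g" using assms by blast
  then show "Hder w S f (Aop w S f)" "Hsp w S (Aop w S f)"
    unfolding Aop_def using someI_ex[OF ex] by simp_all
qed

lemma Hder_absolutely_integrable: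
  "Hder w S f g \<Longrightarrow> x \<in> S \<Longrightarrow> y \<in> S \<Longrightarrow> x \<le> y \<Longrightarrow> g absolutely_integrable_on {x..y}"
  unfolding Hder_def by blast

lemma Hder_integrable:
  "Hder w S f g \<Longrightarrow> x \<in> S \<Longrightarrow> y \<in> S \<Longrightarrow> x \<le> y \<Longrightarrow> g integrable_on {x..y}"
  using Hder_absolutely_integrable set_lebesgue_integral_eq_integral(1) by blast

lemma Hder_integral:
  "Hder w S f g \<Longrightarrow> x \<in> S \<Longrightarrow> y \<in> S \<Longrightarrow> x \<le> y \<Longrightarrow> f y - f x = integral {x..y} g"
  unfolding Hder_def by blast

lemma Hder_weighted_square_integrable:
  "Hder w S f g \<Longrightarrow> (\<lambda>x. (g x)\<^sup>2 * exp (w * x)) integrable_on S"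
  unfolding Hder_def by blast

lemma Hder_continuous_on:
  assumes "Hder w S f g" "{a..b} \<subseteq> S"
  shows "continuous_on {a..b} f"
proof (cases "a \<le> b")
  case True
  have "continuous_on {a..b} (\<lambda>x. f a + integral {a..x} g)"
    by (intro continuous_intros indefinite_integral_continuous_1 Hder_integrable[OF assms(1)])
       (use assms True in auto)
  then show ?thesis
  proof (rule continuous_on_eq)
    fix x assume "x \<in> {a..b}"
    then have "a \<in> S" "x \<in> S" using assms(2) by auto
    then show "f a + integral {a..x} g = f x"
      using Hder_integral[OF assms(1), of a x] \<open>x \<in> {a..b}\<close> by simp
  qed
qed auto

lemma Hsp_continuous_on: "Hsp w S g \<Longrightarrow> {a..b} \<subseteq> S \<Longrightarrow> continuous_on {a..b} g"
  unfolding Hsp_def by (auto intro: Hder_continuous_on)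

lemma Hder_continuous_unique:
  assumes H1: "Hder w S f g1" and H2: "Hder w S f g2" and ab: "a < b" "{a..b} \<subseteq> S"
    and c1: "continuous_on {a..b} g1" and c2: "continuous_on {a..b} g2" and x: "x \<in> {a..b}"
  shows "g1 x = g2 x"
proof -
  let ?h = "\<lambda>x. g1 x - g2 x"
  have "continuous_on {a..b} ?h" using c1 c2 by (intro continuous_intros)
  then have D: "((\<lambda>u. integral {a..u} ?h) has_vector_derivative ?h x) (at x within {a..b})"
    using x by (rule integral_has_vector_derivative)
  have zero: "integral {a..u} ?h = 0" if "u \<in> {a..b}" for u
  proof -
    have "a \<in> S" "u \<in> S" using that ab by auto
    then have "integral {a..u} ?h = integral {a..u} g1 - integral {a..u} g2"
      using that by (intro integral_diff Hder_integrable[OF H1] Hder_integrable[OF H2]) auto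
    also have "\<dots> = 0"
      using Hder_integral[OF H1 \<open>a \<in> S\<close> \<open>u \<in> S\<close>] Hder_integral[OF H2 \<open>a \<in> S\<close> \<open>u \<in> S\<close>] that by auto
    finally show ?thesis .
  qed
  have "((\<lambda>u. 0) has_vector_derivative ?h x) (at x within {a..b})"
    by (rule has_vector_derivative_transform[OF x _ D]) (simp add: zero)
  then have "?h x = 0"
    using vector_derivative_within_cbox[of a b x] has_vector_derivative_const ab(1) x
    by (metis cbox_interval)
  then show ?thesis by simp
qed

lemma Hsp_Hder_unique:
  assumes "Hder w S f g1" "Hder w S f g2" "Hsp w S g1" "Hsp w S g2"
    and "a < b" "{a..b} \<subseteq> S" "x \<in> {a..b}"
  shows "g1 x = g2 x"
  using Hder_continuous_unique[OF assms(1,2,5,6) Hsp_continuous_on[OF assms(3,6)]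
      Hsp_continuous_on[OF assms(4,6)] assms(7)] .

lemma Hder_unique_AE:
  assumes H1: "Hder w UNIV f g1" and H2: "Hder w UNIV f g2"
  shows "negligible {x. g1 x \<noteq> g2 x}"
proof -
  have "negligible {x. g1 x - g2 x \<noteq> 0}"
  proof (rule negligible_nonzero_if_interval_integrals_zero)
    fix x y :: real assume xy: "x \<le> y"
    show "(\<lambda>x. g1 x - g2 x) absolutely_integrable_on {x..y}"
      using Hder_absolutely_integrable[OF H1 _ _ xy] Hder_absolutely_integrable[OF H2 _ _ xy]
      by (intro set_integral_diff(1)) auto
    have "integral {x..y} (\<lambda>x. g1 x - g2 x) = integral {x..y} g1 - integral {x..y} g2"
      using Hder_integrable[OF H1 _ _ xy] Hder_integrable[OF H2 _ _ xy] by (intro integral_diff) auto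
    also have "\<dots> = 0" using Hder_integral[OF H1 _ _ xy] Hder_integral[OF H2 _ _ xy] by simp
    finally show "integral {x..y} (\<lambda>x. g1 x - g2 x) = 0" .
  qed
  then show ?thesis by simp
qed

lemma Hder_halfline_measurable:
  assumes "Hder w {0..} f g" shows "g \<in> borel_measurable (lebesgue_on {0..})"
proof -
  have "g integrable_on ({0..} \<inter> cbox a b)" for a b
  proof (cases "max a 0 \<le> b")
    case True
    have "{0..} \<inter> cbox a b = {max a 0..b}" by auto
    then show ?thesis using Hder_integrable[OF assms, of "max a 0" b] True by simp
  next
    case False
    then have "{0..} \<inter> cbox a b = {}" by auto
    then show ?thesis by (metis integrable_on_empty)
  qed
  then have "(\<lambda>x. if x \<in> {0..} then g x else 0) integrable_on cbox a b" for a b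
    using integrable_restrict_Int by blast
  then have "(\<lambda>x. if x \<in> {0..} then g x else 0) measurable_on UNIV"
    by (rule integrable_subintervals_imp_measurable)
  then show ?thesis
    using measurable_on_UNIV[of "{0..}" g] by (simp add: measurable_on_iff_borel_measurable)
qed

lemma sq_add_le: "((a::real) + b)\<^sup>2 \<le> 2 * a\<^sup>2 + 2 * b\<^sup>2"
  using zero_le_power2[of "a - b"] unfolding power2_eq_square by (simp add: algebra_simps)

lemma Hder_add_halfline:
  assumes H1: "Hder w {0..} f1 g1" and H2: "Hder w {0..} f2 g2"
  shows "Hder w {0..} (\<lambda>x. f1 x + f2 x) (\<lambda>x. g1 x + g2 x)"
  unfolding Hder_def
proof (intro conjI ballI impI)
  fix x y :: real assume xy: "x \<in> {0..}" "y \<in> {0..}" "x \<le> y"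
  show "(\<lambda>x. g1 x + g2 x) absolutely_integrable_on {x..y}"
    using Hder_absolutely_integrable[OF H1 xy] Hder_absolutely_integrable[OF H2 xy]
    by (rule set_integral_add(1))
  have "integral {x..y} (\<lambda>x. g1 x + g2 x) = integral {x..y} g1 + integral {x..y} g2"
    using Hder_integrable[OF H1 xy] Hder_integrable[OF H2 xy] by (rule integral_add)
  then show "f1 y + f2 y - (f1 x + f2 x) = integral {x..y} (\<lambda>x. g1 x + g2 x)"
    using Hder_integral[OF H1 xy] Hder_integral[OF H2 xy] by linarith
next
  show "(\<lambda>x. (g1 x + g2 x)\<^sup>2 * exp (w * x)) integrable_on {0..}"
  proof (rule measurable_bounded_by_integrable_imp_integrable_real)
    have "(\<lambda>x::real. exp (w * x)) \<in> borel_measurable (lebesgue_on {0..})"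
      by (rule continuous_imp_measurable_on_sets_lebesgue) (auto intro: continuous_intros)
    then show "(\<lambda>x. (g1 x + g2 x)\<^sup>2 * exp (w * x)) \<in> borel_measurable (lebesgue_on {0..})"
      using Hder_halfline_measurable[OF H1] Hder_halfline_measurable[OF H2]
      by (intro borel_measurable_times borel_measurable_add borel_measurable_power)
    show "(\<lambda>x. 2 * ((g1 x)\<^sup>2 * exp (w * x)) + 2 * ((g2 x)\<^sup>2 * exp (w * x))) integrable_on {0..}"
      using Hder_weighted_square_integrable[OF H1] Hder_weighted_square_integrable[OF H2]
      by (intro integrable_add integrable_on_mult_right)
    show "\<bar>(g1 x + g2 x)\<^sup>2 * exp (w * x)\<bar> \<le> 2 * ((g1 x)\<^sup>2 * exp (w * x)) + 2 * ((g2 x)\<^sup>2 * exp (w * x))" for x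
      using mult_right_mono[OF sq_add_le[of "g1 x" "g2 x"], of "exp (w * x)"] by (simp add: algebra_simps)
  qed auto
qed

lemma Hder_cmult:
  assumes H: "Hder w S f g"
  shows "Hder w S (\<lambda>x. c * f x) (\<lambda>x. c * g x)"
  unfolding Hder_def
proof (intro conjI ballI impI)
  fix x y :: real assume xy: "x \<in> S" "y \<in> S" "x \<le> y"
  show "(\<lambda>x. c * g x) absolutely_integrable_on {x..y}"
    using Hder_absolutely_integrable[OF H xy] by (rule set_integrable_mult_right)
  show "c * f y - c * f x = integral {x..y} (\<lambda>x. c * g x)"
    using Hder_integral[OF H xy] by (simp flip: right_diff_distrib)
next
  have "(\<lambda>x. c\<^sup>2 * ((g x)\<^sup>2 * exp (w * x))) integrable_on S"
    using Hder_weighted_square_integrable[OF H] by (rule integrable_on_mult_right)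
  then show "(\<lambda>x. (c * g x)\<^sup>2 * exp (w * x)) integrable_on S"
    by (simp add: power_mult_distrib mult.assoc)
qed

section \<open>Boundary values in terms of the norm\<close>

lemma two_abs_le_AM_GM:
  assumes "0 < t" "0 < (E::real)" shows "2 * \<bar>a\<bar> \<le> t * a\<^sup>2 * E + 1 / (t * E)"
proof -
  have "0 \<le> (t * \<bar>a\<bar> * E - 1)\<^sup>2 / (t * E)" using assms by simp
  also have "\<dots> = t * a\<^sup>2 * E + 1 / (t * E) - 2 * \<bar>a\<bar>"
    using assms by (simp add: power2_eq_square field_simps abs_mult_self_eq)
  finally show ?thesis by simp
qed

lemma sq_le_if_le_AM_GM:
  fixes I w J :: real
  assumes I: "0 \<le> I" and w: "0 < w" and J: "0 \<le> J"
    and le: "\<And>t. 0 < t \<Longrightarrow> J \<le> (t * I + 1 / (w * t)) / 2"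
  shows "J\<^sup>2 \<le> I / w"
proof (cases "I = 0")
  case True
  have "J = 0"
  proof (rule ccontr)
    assume "J \<noteq> 0"
    then have J_pos: "0 < J" using J by simp
    have "J \<le> (1 / (w * (1 / (w * J)))) / 2" using le[of "1 / (w * J)"] True J_pos w by simp
    also have "\<dots> = J / 2" using J_pos w by simp
    finally show False using J_pos by simp
  qed
  then show ?thesis using True by simp
next
  case False
  then have I_pos: "0 < I" using I by simp
  define s where "s = sqrt (I / w)"
  have s_pos: "0 < s" and s_sq: "s\<^sup>2 = I / w" unfolding s_def using I_pos w by simp_all
  have "J \<le> ((s / I) * I + 1 / (w * (s / I))) / 2" using le[of "s / I"] s_pos I_pos by simp
  also have "\<dots> = s"
    using s_sq s_pos w I_pos by (simp add: field_simps power2_eq_square)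
  finally have "J\<^sup>2 \<le> s\<^sup>2" using J by (intro power_mono) auto
  then show ?thesis using s_sq by simp
qed

lemma weighted_square_integrable_halfline:
  fixes h :: "real \<Rightarrow> real"
  assumes w: "0 < w" and h: "h \<in> borel_measurable (lebesgue_on {0..})"
    and sq: "(\<lambda>x. (h x)\<^sup>2 * exp (w * x)) integrable_on {0..}"
  shows "h absolutely_integrable_on {0..}"
    and "(integral {0..} h)\<^sup>2 \<le> integral {0..} (\<lambda>x. (h x)\<^sup>2 * exp (w * x)) / w"
proof -
  define I where "I = integral {0..} (\<lambda>x. (h x)\<^sup>2 * exp (w * x))"
  have h_sq: "((\<lambda>x. (h x)\<^sup>2 * exp (w * x)) has_integral I) {0..}"
    unfolding I_def using sq by (rule integrable_integral)
  have I_nonneg: "0 \<le> I" unfolding I_def by (rule integral_nonneg[OF sq]) auto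
  have exp_int: "((\<lambda>x. exp (- w * x)) has_integral 1 / w) {0..}"
    using has_integral_exp_minus_to_infinity[OF w, of 0] by simp
  text \<open>Cauchy--Schwarz against the weight, in the form of AM-GM with a free parameter \<open>t\<close>.\<close>
  define B where "B = (\<lambda>t x. t / 2 * ((h x)\<^sup>2 * exp (w * x)) + 1 / (2 * t) * exp (- w * x))"
  have B_int: "(B t has_integral (t / 2 * I + 1 / (2 * t) * (1 / w))) {0..}" for t
    unfolding B_def by (intro has_integral_add has_integral_mult_right h_sq exp_int)
  have B_bound: "\<bar>h x\<bar> \<le> B t x" if "0 < t" for t x
  proof -
    have "2 * \<bar>h x\<bar> \<le> t * (h x)\<^sup>2 * exp (w * x) + 1 / (t * exp (w * x))"
      by (rule two_abs_le_AM_GM) (use that in auto)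
    moreover have "1 / (t * exp (w * x)) = exp (- w * x) / t" by (simp add: exp_minus field_simps)
    ultimately show ?thesis unfolding B_def using that by (simp add: field_simps)
  qed
  show h_abs: "h absolutely_integrable_on {0..}"
    by (rule measurable_bounded_by_integrable_imp_absolutely_integrable[OF h _ has_integral_integrable[OF B_int[of 1]]])
       (use B_bound[of 1] in auto)
  have "\<bar>integral {0..} h\<bar> \<le> (t * I + 1 / (w * t)) / 2" if t: "0 < t" for t
  proof -
    have "norm (integral {0..} h) \<le> integral {0..} (B t)"
      using h_abs set_lebesgue_integral_eq_integral(1) B_bound t
      by (intro integral_norm_bound_integral has_integral_integrable[OF B_int]) auto
    also have "\<dots> = (t * I + 1 / (w * t)) / 2"
      using integral_unique[OF B_int] by (simp add: field_simps)
    finally show ?thesis by simp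
  qed
  then have "\<bar>integral {0..} h\<bar>\<^sup>2 \<le> I / w" by (intro sq_le_if_le_AM_GM[OF I_nonneg w]) auto
  then show "(integral {0..} h)\<^sup>2 \<le> I / w" by simp
qed

lemma Hder_halfline_tendsto:
  assumes H: "Hder w {0..} g h" and w: "0 < w"
  shows "(g \<longlongrightarrow> g 0 + integral {0..} h) at_top"
    and "(integral {0..} h)\<^sup>2 \<le> integral {0..} (\<lambda>x. (h x)\<^sup>2 * exp (w * x)) / w"
proof -
  note h = weighted_square_integrable_halfline[OF w Hder_halfline_measurable[OF H] Hder_weighted_square_integrable[OF H]]
  show "(integral {0..} h)\<^sup>2 \<le> integral {0..} (\<lambda>x. (h x)\<^sup>2 * exp (w * x)) / w" by (rule h(2))
  have "((\<lambda>b. set_lebesgue_integral lebesgue {0..b} h) \<longlongrightarrow> set_lebesgue_integral lebesgue {0..} h) at_top"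
    by (rule tendsto_set_lebesgue_integral_at_top) (use h(1) in auto)
  moreover have "set_lebesgue_integral lebesgue {0..} h = integral {0..} h"
    using set_lebesgue_integral_eq_integral(2)[OF h(1)] .
  moreover have "\<forall>\<^sub>F b in at_top. set_lebesgue_integral lebesgue {0..b} h = g b - g 0"
  proof (rule eventually_at_top_linorderI[of 0])
    fix b :: real assume b: "0 \<le> b"
    have "set_integrable lebesgue {0..b} h" by (rule set_integrable_subset[OF h(1)]) auto
    then have "set_lebesgue_integral lebesgue {0..b} h = integral {0..b} h"
      by (rule set_lebesgue_integral_eq_integral(2))
    also have "\<dots> = g b - g 0" using Hder_integral[OF H, of 0 b] b by simp
    finally show "set_lebesgue_integral lebesgue {0..b} h = g b - g 0" .
  qed
  ultimately have "((\<lambda>b. g b - g 0) \<longlongrightarrow> integral {0..} h) at_top"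
    using tendsto_cong by force
  then have "((\<lambda>b. g 0 + (g b - g 0)) \<longlongrightarrow> g 0 + integral {0..} h) at_top"
    by (intro tendsto_add) auto
  then show "(g \<longlongrightarrow> g 0 + integral {0..} h) at_top" by simp
qed

definition hderiv :: "real \<Rightarrow> (real \<Rightarrow> real) \<Rightarrow> nat \<Rightarrow> real \<Rightarrow> real" where
  "hderiv w f k = (Aop w {0..} ^^ k) f"

lemma hderiv_0 [simp]: "hderiv w f 0 = f"
  by (simp add: hderiv_def)

lemma hderiv_Suc: "hderiv w f (Suc k) = Aop w {0..} (hderiv w f k)"
  by (simp add: hderiv_def)

lemma Dom_hderiv_Hsp: "Dom w {0..} n f \<Longrightarrow> k \<le> n \<Longrightarrow> Hsp w {0..} (hderiv w f k)"
  unfolding Dom_def hderiv_def by blast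

lemma Dom_hderiv_Hder: "Dom w {0..} n f \<Longrightarrow> k \<le> n \<Longrightarrow> Hder w {0..} (hderiv w f k) (hderiv w f (Suc k))"
  using Aop_Hder[OF Dom_hderiv_Hsp] hderiv_Suc by metis

lemma hderiv_cong:
  assumes "\<And>x. 0 \<le> x \<Longrightarrow> f x = g x"
  shows "0 \<le> x \<Longrightarrow> hderiv w f k x = hderiv w g k x"
proof (induction k arbitrary: x)
  case (Suc k)
  then show ?case unfolding hderiv_Suc by (subst Aop_cong[of _ _ "hderiv w g k"]) auto
qed (use assms in simp)

lemma hderiv_lincomb:
  assumes f: "Dom w {0..} n f" and g: "Dom w {0..} n g"
  shows "k \<le> n \<Longrightarrow> 0 \<le> x \<Longrightarrow>
    hderiv w (\<lambda>x. a * f x + b * g x) k x = a * hderiv w f k x + b * hderiv w g k x"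
proof (induction k arbitrary: x)
  case (Suc k)
  define F where "F = (\<lambda>x. a * hderiv w f k x + b * hderiv w g k x)"
  define G where "G = (\<lambda>x. a * hderiv w f (Suc k) x + b * hderiv w g (Suc k) x)"
  have "hderiv w (\<lambda>x. a * f x + b * g x) (Suc k) = Aop w {0..} F"
    unfolding hderiv_Suc F_def by (rule Aop_cong) (use Suc in auto)
  moreover have FG: "Hder w {0..} F G" unfolding F_def G_def
    using Suc by (intro Hder_add_halfline Hder_cmult Dom_hderiv_Hder[OF f] Dom_hderiv_Hder[OF g]) auto
  moreover have "Hsp w {0..} G" unfolding Hsp_def G_def
    using Suc by (intro exI[of _ "\<lambda>x. a * hderiv w f (Suc (Suc k)) x + b * hderiv w g (Suc (Suc k)) x"]
        Hder_add_halfline Hder_cmult Dom_hderiv_Hder[OF f] Dom_hderiv_Hder[OF g]) auto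
  ultimately show ?case
    using Hsp_Hder_unique[OF Aop_Hder_Hsp(1)[OF FG] FG Aop_Hder_Hsp(2)[OF FG], of 0 "x + 1" x] Suc
    by (auto simp: G_def)
qed simp

lemma Hnorm2_nonneg: "0 \<le> Hnorm2 w S g"
proof -
  have "0 \<le> integral S (\<lambda>x. (Aop w S g x)\<^sup>2 * exp (w * x))"
    by (cases "(\<lambda>x. (Aop w S g x)\<^sup>2 * exp (w * x)) integrable_on S")
       (auto intro: integral_nonneg simp: not_integrable_integral)
  then show ?thesis unfolding Hnorm2_def by simp
qed

lemma hderiv_at_0_sq_le:
  assumes f: "Dom w {0..} n f" and k: "k \<le> n" and w: "0 < w"
  shows "(hderiv w f k 0)\<^sup>2 \<le> (2 + 2 / w) * Hnorm2 w {0..} (hderiv w f k)"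
proof -
  define h where "h = hderiv w f (Suc k)"
  define I where "I = integral {0..} (\<lambda>x. (h x)\<^sup>2 * exp (w * x))"
  define L where "L = hderiv w f k 0 + integral {0..} h"
  note lim = Hder_halfline_tendsto[OF Dom_hderiv_Hder[OF f k] w, folded h_def I_def L_def]
  have norm: "Hnorm2 w {0..} (hderiv w f k) = L\<^sup>2 + I"
    unfolding Hnorm2_def I_def h_def hderiv_Suc using tendsto_Lim[OF _ lim(1)] by (simp add: L_def)
  have I_nonneg: "0 \<le> I" unfolding I_def h_def
    using Hder_weighted_square_integrable[OF Dom_hderiv_Hder[OF f k]] by (intro integral_nonneg) auto
  have "(hderiv w f k 0)\<^sup>2 \<le> 2 * L\<^sup>2 + 2 * (I / w)"
    using sq_add_le[of L "- integral {0..} h"] lim(2) unfolding L_def I_def by simp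
  also have "\<dots> \<le> (2 + 2 / w) * (L\<^sup>2 + I)"
  proof -
    have "0 \<le> 2 * I + 2 * L\<^sup>2 / w" using I_nonneg w by simp
    then show ?thesis by (simp add: algebra_simps)
  qed
  finally show ?thesis unfolding norm .
qed

section \<open>Polynomials are weighted square integrable on the negative half line\<close>

lemma exp_absolutely_integrable_nonpos:
  assumes c: "0 < (c::real)"
  shows "(\<lambda>x. exp (c * x)) absolutely_integrable_on {..0}"
proof -
  have 1: "(\<lambda>x. exp (-c * x)) absolutely_integrable_on {0..}"
    by (rule nonnegative_absolutely_integrable_1) (use integrable_on_exp_minus_to_infinity[OF c] in auto)
  have m: "(\<lambda>x. indicator {0..} x * exp (-c * x)) \<in> borel_measurable lborel" by measurable
  have 2: "integrable lborel (\<lambda>x. indicator {0..} x * exp (-c * x))"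
    using 1 integrable_completion[OF m] unfolding set_integrable_def by simp
  have eq: "(\<lambda>x. indicator {..0} (0 + (-1) * x) * exp (c * (0 + (-1) * x))) = (\<lambda>x::real. indicator {0..} x * exp (-c * x))"
    by (auto simp: indicator_def)
  have 3: "integrable lborel (\<lambda>x. indicator {..0} x * exp (c * x))"
    using lborel_integrable_real_affine_iff[of "-1" "\<lambda>x. indicator {..0} x * exp (c * x)" 0] 2 eq by simp
  have m2: "(\<lambda>x. indicator {..0} x * exp (c * x)) \<in> borel_measurable lborel" by measurable
  show ?thesis using 3 integrable_completion[OF m2] unfolding set_integrable_def by simp
qed

lemma pow_le_fact_mult_exp:
  assumes "0 \<le> (y::real)" shows "y ^ p \<le> fact p * exp y"
proof -
  have "(\<lambda>k. y ^ k /\<^sub>R fact k) sums exp y" by (rule exp_converges)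
  then have s: "summable (\<lambda>k. y ^ k / fact k)" and e: "exp y = (\<Sum>k. y ^ k / fact k)"
    by (auto simp: sums_iff divide_inverse_commute)
  have "sum (\<lambda>k. y ^ k / fact k) {p} \<le> (\<Sum>k. y ^ k / fact k)"
    by (rule sum_le_suminf[OF s]) (use assms in auto)
  then have "y ^ p / fact p \<le> exp y" using e by simp
  then show ?thesis by (simp add: field_simps)
qed

lemma abs_pow_le_exp_nonpos:
  assumes w: "0 < w" and x: "x \<le> (0::real)"
  shows "\<bar>x\<bar> ^ p \<le> fact p * (2 / w) ^ p * exp (- w * x / 2)"
proof -
  have a: "(w / 2 * \<bar>x\<bar>) ^ p \<le> fact p * exp (w / 2 * \<bar>x\<bar>)"
    by (rule pow_le_fact_mult_exp) (use w in auto)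
  have b: "(w / 2 * \<bar>x\<bar>) ^ p = (w / 2) ^ p * \<bar>x\<bar> ^ p" by (rule power_mult_distrib)
  have c: "w / 2 * \<bar>x\<bar> = - w * x / 2" using x by (simp add: abs_of_nonpos)
  have "(w / 2) ^ p * \<bar>x\<bar> ^ p \<le> fact p * exp (- w * x / 2)" using a b c by metis
  then have "(2 / w) ^ p * ((w / 2) ^ p * \<bar>x\<bar> ^ p) \<le> (2 / w) ^ p * (fact p * exp (- w * x / 2))"
    by (intro mult_left_mono) (use w in auto)
  moreover have "(2 / w) ^ p * (w / 2) ^ p = 1" using w by (simp add: power_mult_distrib[symmetric])
  ultimately show ?thesis by (simp add: algebra_simps)
qed

lemma poly_weight_integrable_nonpos:
  assumes w: "0 < (w::real)"
  shows "(\<lambda>x. (1 + \<bar>x\<bar> ^ n)\<^sup>2 * exp (w * x)) integrable_on {..0}"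
proof (rule measurable_bounded_by_integrable_imp_integrable_real)
  define K :: real where "K = fact (2*n) * (2 / w) ^ (2*n)"
  show "(\<lambda>x. (1 + \<bar>x\<bar> ^ n)\<^sup>2 * exp (w * x)) \<in> borel_measurable (lebesgue_on {..0})"
    by (rule continuous_imp_measurable_on_sets_lebesgue) (auto intro!: continuous_intros)
  show "(\<lambda>x. (2 + 2 * K) * exp ((w/2) * x)) integrable_on {..0}"
    using exp_absolutely_integrable_nonpos[of "w/2"] w set_lebesgue_integral_eq_integral(1) by (intro integrable_on_mult_right) auto
  show "\<bar>(1 + \<bar>x\<bar> ^ n)\<^sup>2 * exp (w * x)\<bar> \<le> (2 + 2 * K) * exp ((w/2) * x)" if x: "x \<in> {..0}" for x
  proof -
    have b: "\<bar>x\<bar> ^ (2*n) \<le> K * exp (- w * x / 2)" unfolding K_def using abs_pow_le_exp_nonpos[OF w, of x "2*n"] x by simp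
    have pe: "(\<bar>x\<bar> ^ n)\<^sup>2 = \<bar>x\<bar> ^ (2*n)" by (metis power_mult mult.commute)
    have "(1 + \<bar>x\<bar> ^ n)\<^sup>2 \<le> 2 + 2 * \<bar>x\<bar> ^ (2*n)"
      using sq_add_le[of 1 "\<bar>x\<bar> ^ n"] unfolding pe by simp
    then have "(1 + \<bar>x\<bar> ^ n)\<^sup>2 * exp (w * x) \<le> (2 + 2 * \<bar>x\<bar> ^ (2*n)) * exp (w * x)"
      by (intro mult_right_mono) auto
    also have "\<dots> \<le> (2 + 2 * (K * exp (- w * x / 2))) * exp (w * x)"
      using b by (intro mult_right_mono) auto
    also have "\<dots> = 2 * exp (w * x) + 2 * K * exp ((w/2) * x)"
      by (simp add: algebra_simps flip: exp_add)
    also have "\<dots> \<le> 2 * exp ((w/2) * x) + 2 * K * exp ((w/2) * x)"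
      using x w by (auto intro: mult_left_mono_neg)
    also have "\<dots> = (2 + 2 * K) * exp ((w/2) * x)" by (simp add: algebra_simps)
    finally show ?thesis by simp
  qed
qed auto

section \<open>The Taylor extension\<close>

definition taylor_poly :: "real \<Rightarrow> nat \<Rightarrow> (real \<Rightarrow> real) \<Rightarrow> nat \<Rightarrow> real \<Rightarrow> real" where
  "taylor_poly w n f j x = (\<Sum>i<Suc n - j. hderiv w f (j+i) 0 * x^i / fact i)"

text \<open>\<open>taylor_ext w n f 0\<close> continues \<open>f\<close> to the left by its Taylor polynomial of degree \<open>n\<close> at \<open>0\<close>;
  \<open>taylor_ext w n f j\<close> will turn out to be its \<open>j\<close>-th weak derivative.\<close>

definition taylor_ext :: "real \<Rightarrow> nat \<Rightarrow> (real \<Rightarrow> real) \<Rightarrow> nat \<Rightarrow> real \<Rightarrow> real" where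
  "taylor_ext w n f j x = (if 0 < x then hderiv w f j x else taylor_poly w n f j x)"

lemma taylor_ext_pos: "0 < x \<Longrightarrow> taylor_ext w n f j x = hderiv w f j x"
  by (simp add: taylor_ext_def)

lemma taylor_ext_nonpos: "x \<le> 0 \<Longrightarrow> taylor_ext w n f j x = taylor_poly w n f j x"
  by (simp add: taylor_ext_def)

lemma taylor_poly_at_0: "j \<le> n \<Longrightarrow> taylor_poly w n f j 0 = hderiv w f j 0"
proof -
  assume "j \<le> n" then have "Suc n - j = Suc (n - j)" by simp
  then show ?thesis unfolding taylor_poly_def by (simp add: sum.lessThan_Suc_shift del: sum.lessThan_Suc)
qed

lemma taylor_poly_has_derivative:
  assumes "j \<le> n" shows "(taylor_poly w n f j has_real_derivative taylor_poly w n f (Suc j) x) (at x)"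
proof -
  define M where "M = n - j"
  have e1: "Suc n - j = Suc M" "Suc n - Suc j = M" using assms unfolding M_def by auto
  define c where "c = (\<lambda>i. hderiv w f i 0)"
  have P1: "taylor_poly w n f j = (\<lambda>x. c j + (\<Sum>i<M. c (j + Suc i) * x^(Suc i) / fact (Suc i)))"
    unfolding taylor_poly_def e1 c_def by (rule ext) (simp add: sum.lessThan_Suc_shift del: sum.lessThan_Suc)
  have P2: "taylor_poly w n f (Suc j) x = (\<Sum>i<M. c (j + Suc i) * x^i / fact i)"
    unfolding taylor_poly_def e1 c_def by simp
  have t: "((\<lambda>x. c (j + Suc i) * x^(Suc i) / fact (Suc i)) has_real_derivative c (j + Suc i) * x^i / fact i) (at x)" for i
  proof -
    have "((\<lambda>x. c (j + Suc i) * x^(Suc i) / fact (Suc i)) has_real_derivative c (j + Suc i) * (real (Suc i) * x^i) / fact (Suc i)) (at x)"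
      by (intro derivative_eq_intros) auto
    moreover have "c (j + Suc i) * (real (Suc i) * x^i) / fact (Suc i) = c (j + Suc i) * x^i / fact i"
      by (simp add: fact_Suc field_simps del: of_nat_Suc)
    ultimately show ?thesis by simp
  qed
  have "((\<lambda>x. c j + (\<Sum>i<M. c (j + Suc i) * x^(Suc i) / fact (Suc i))) has_real_derivative 0 + (\<Sum>i<M. c (j + Suc i) * x^i / fact i)) (at x)"
    by (intro DERIV_add DERIV_const DERIV_sum t)
  then show ?thesis unfolding P1 P2 by simp
qed

lemma continuous_on_taylor_poly: "continuous_on S (taylor_poly w n f j)"
  unfolding taylor_poly_def by (intro continuous_intros) auto

lemma taylor_poly_has_integral:
  assumes "j \<le> n" "a \<le> b"
  shows "(taylor_poly w n f (Suc j) has_integral (taylor_poly w n f j b - taylor_poly w n f j a)) {a..b}"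
proof (rule fundamental_theorem_of_calculus[OF assms(2)])
  fix x assume "x \<in> {a..b}"
  have "(taylor_poly w n f j has_vector_derivative taylor_poly w n f (Suc j) x) (at x)"
    using taylor_poly_has_derivative[OF assms(1)] by (simp add: has_real_derivative_iff_has_vector_derivative)
  then show "(taylor_poly w n f j has_vector_derivative taylor_poly w n f (Suc j) x) (at x within {a..b})"
    by (rule has_vector_derivative_at_within)
qed

lemma taylor_ext_has_integral_nonpos:
  assumes "j \<le> n" "a \<le> b" "b \<le> 0"
  shows "(taylor_ext w n f (Suc j) has_integral (taylor_poly w n f j b - taylor_poly w n f j a)) {a..b}"
    and "taylor_ext w n f (Suc j) absolutely_integrable_on {a..b}"
proof -
  have eq: "taylor_ext w n f (Suc j) x = taylor_poly w n f (Suc j) x" if "x \<in> {a..b}" for x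
    using that assms by (simp add: taylor_ext_nonpos)
  show "(taylor_ext w n f (Suc j) has_integral (taylor_poly w n f j b - taylor_poly w n f j a)) {a..b}"
    by (rule has_integral_eq[OF _ taylor_poly_has_integral[OF assms(1,2)]]) (simp add: eq)
  show "taylor_ext w n f (Suc j) absolutely_integrable_on {a..b}"
    by (subst set_integrable_cong[OF refl refl eq])
       (simp_all add: absolutely_integrable_continuous_real[OF continuous_on_taylor_poly])
qed

lemma taylor_ext_has_integral_nonneg:
  assumes f: "Dom w {0..} n f" and j: "j \<le> n" and ab: "0 \<le> a" "a \<le> b"
  shows "(taylor_ext w n f (Suc j) has_integral (hderiv w f j b - hderiv w f j a)) {a..b}"
    and "taylor_ext w n f (Suc j) absolutely_integrable_on {a..b}"
proof -
  have H: "Hder w {0..} (hderiv w f j) (hderiv w f (Suc j))" by (rule Dom_hderiv_Hder[OF f j])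
  have eq: "taylor_ext w n f (Suc j) x = hderiv w f (Suc j) x" if "x \<in> {a..b} - {0}" for x
    using that ab by (simp add: taylor_ext_pos)
  have ab': "a \<in> {0..}" "b \<in> {0..}" using ab by auto
  have int: "(hderiv w f (Suc j) has_integral (hderiv w f j b - hderiv w f j a)) {a..b}"
    unfolding Hder_integral[OF H ab' ab(2)] by (rule integrable_integral[OF Hder_integrable[OF H ab' ab(2)]])
  show "(taylor_ext w n f (Suc j) has_integral (hderiv w f j b - hderiv w f j a)) {a..b}"
    by (rule has_integral_spike[OF negligible_sing[of 0] _ int]) (simp add: eq)
  show "taylor_ext w n f (Suc j) absolutely_integrable_on {a..b}"
    using absolutely_integrable_spike[OF Hder_absolutely_integrable[OF H ab' ab(2)] negligible_sing eq] .
qed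

lemma taylor_ext_has_integral:
  assumes f: "Dom w {0..} n f" and j: "j \<le> n" and xy: "x \<le> y"
  shows "(taylor_ext w n f (Suc j) has_integral (taylor_ext w n f j y - taylor_ext w n f j x)) {x..y}"
    and "taylor_ext w n f (Suc j) absolutely_integrable_on {x..y}"
proof -
  consider "y \<le> 0" | "0 < x" | "x \<le> 0" "0 < y" by linarith
  then have "(taylor_ext w n f (Suc j) has_integral (taylor_ext w n f j y - taylor_ext w n f j x)) {x..y} \<and>
        taylor_ext w n f (Suc j) absolutely_integrable_on {x..y}"
  proof cases
    case 1
    then show ?thesis using taylor_ext_has_integral_nonpos[OF j xy 1, of w f] xy by (simp add: taylor_ext_nonpos)
  next
    case 2
    then show ?thesis using taylor_ext_has_integral_nonneg[OF f j _ xy] xy by (simp add: taylor_ext_pos)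
  next
    case 3
    note left = taylor_ext_has_integral_nonpos[OF j 3(1) order_refl, of w f]
    note right = taylor_ext_has_integral_nonneg[OF f j order_refl less_imp_le[OF 3(2)]]
    have "(taylor_ext w n f (Suc j) has_integral
        ((taylor_poly w n f j 0 - taylor_poly w n f j x) + (hderiv w f j y - hderiv w f j 0))) {x..y}"
      by (rule has_integral_combine[OF _ _ left(1) right(1)]) (use 3 in auto)
    moreover have "(taylor_poly w n f j 0 - taylor_poly w n f j x) + (hderiv w f j y - hderiv w f j 0)
        = taylor_ext w n f j y - taylor_ext w n f j x"
      using taylor_poly_at_0[OF j, of w f] 3 by (simp add: taylor_ext_def)
    moreover have "{x..0} \<union> {0..y} = {x..y}" using 3 by auto
    then have "taylor_ext w n f (Suc j) absolutely_integrable_on {x..y}"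
      using set_integrable_Un[OF left(2) right(2)] by auto
    ultimately show ?thesis by simp
  qed
  then show "(taylor_ext w n f (Suc j) has_integral (taylor_ext w n f j y - taylor_ext w n f j x)) {x..y}"
    and "taylor_ext w n f (Suc j) absolutely_integrable_on {x..y}" by auto
qed

lemma abs_pow_le_one_plus_abs_pow: "i \<le> n \<Longrightarrow> \<bar>x::real\<bar> ^ i \<le> 1 + \<bar>x\<bar> ^ n"
proof (cases "\<bar>x\<bar> \<le> 1")
  case True
  then have "\<bar>x\<bar> ^ i \<le> 1" by (simp add: power_le_one)
  then show ?thesis by (smt (verit) zero_le_power abs_ge_zero)
next
  case False
  assume "i \<le> n"
  then have "\<bar>x\<bar> ^ i \<le> \<bar>x\<bar> ^ n" using False by (intro power_increasing) auto
  then show ?thesis by simp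
qed

lemma abs_taylor_poly_le: "\<bar>taylor_poly w n f j x\<bar> \<le> (\<Sum>i<Suc n - j. \<bar>hderiv w f (j+i) 0\<bar>) * (1 + \<bar>x\<bar> ^ n)"
proof -
  have "\<bar>taylor_poly w n f j x\<bar> \<le> (\<Sum>i<Suc n - j. \<bar>hderiv w f (j+i) 0 * x^i / fact i\<bar>)"
    unfolding taylor_poly_def by (rule sum_abs)
  also have "\<dots> \<le> (\<Sum>i<Suc n - j. \<bar>hderiv w f (j+i) 0\<bar> * (1 + \<bar>x\<bar> ^ n))"
  proof (rule sum_mono)
    fix i assume "i \<in> {..<Suc n - j}"
    then have i: "i \<le> n" by auto
    have "\<bar>hderiv w f (j+i) 0 * x^i / fact i\<bar> = \<bar>hderiv w f (j+i) 0\<bar> * (\<bar>x\<bar>^i / fact i)"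
      by (simp add: abs_mult power_abs)
    also have "\<dots> \<le> \<bar>hderiv w f (j+i) 0\<bar> * (1 + \<bar>x\<bar> ^ n)"
    proof (rule mult_left_mono)
      have d: "(1::real) \<le> fact i" by (rule fact_ge_1)
      have "\<bar>x\<bar>^i \<le> \<bar>x\<bar>^i * fact i" using d mult_left_mono[of 1 "fact i" "\<bar>x\<bar>^i"] by simp
      then have "\<bar>x\<bar>^i / fact i \<le> \<bar>x\<bar>^i" using d by (simp add: pos_divide_le_eq)
      then show "\<bar>x\<bar>^i / fact i \<le> 1 + \<bar>x\<bar> ^ n" using abs_pow_le_one_plus_abs_pow[OF i, of x] by linarith
    qed simp
    finally show "\<bar>hderiv w f (j+i) 0 * x^i / fact i\<bar> \<le> \<bar>hderiv w f (j+i) 0\<bar> * (1 + \<bar>x\<bar> ^ n)" .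
  qed
  also have "\<dots> = (\<Sum>i<Suc n - j. \<bar>hderiv w f (j+i) 0\<bar>) * (1 + \<bar>x\<bar> ^ n)"
    by (simp add: sum_distrib_right)
  finally show ?thesis .
qed

lemma taylor_poly_weighted_square_integrable:
  assumes w: "0 < w"
  shows "(\<lambda>x. (taylor_poly w n f j x)\<^sup>2 * exp (w * x)) integrable_on {..0}"
proof (rule measurable_bounded_by_integrable_imp_integrable_real)
  define B where "B = (\<Sum>i<Suc n - j. \<bar>hderiv w f (j+i) 0\<bar>)"
  show "(\<lambda>x. (taylor_poly w n f j x)\<^sup>2 * exp (w * x)) \<in> borel_measurable (lebesgue_on {..0})"
    by (rule continuous_imp_measurable_on_sets_lebesgue) (auto intro!: continuous_intros continuous_on_compose2[OF continuous_on_taylor_poly])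
  show "(\<lambda>x. B\<^sup>2 * ((1 + \<bar>x\<bar> ^ n)\<^sup>2 * exp (w * x))) integrable_on {..0}"
    by (rule integrable_on_mult_right[OF poly_weight_integrable_nonpos[OF w]])
  show "\<bar>(taylor_poly w n f j x)\<^sup>2 * exp (w * x)\<bar> \<le> B\<^sup>2 * ((1 + \<bar>x\<bar> ^ n)\<^sup>2 * exp (w * x))" for x
  proof -
    have "\<bar>taylor_poly w n f j x\<bar> \<le> B * (1 + \<bar>x\<bar> ^ n)" unfolding B_def by (rule abs_taylor_poly_le)
    then have "\<bar>taylor_poly w n f j x\<bar>\<^sup>2 \<le> (B * (1 + \<bar>x\<bar> ^ n))\<^sup>2" by (intro power_mono) auto
    then have "(taylor_poly w n f j x)\<^sup>2 * exp (w * x) \<le> (B * (1 + \<bar>x\<bar> ^ n))\<^sup>2 * exp (w * x)"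
      by (intro mult_right_mono) auto
    then show ?thesis by (simp add: power_mult_distrib mult.assoc)
  qed
qed auto



lemma taylor_ext_weighted_square_has_integral:
  assumes f: "Dom w {0..} n f" and j: "j \<le> n" and w: "0 < w"
  shows "((\<lambda>t. (taylor_ext w n f (Suc j) t)\<^sup>2 * exp (w * t)) has_integral
     integral {0..} (\<lambda>t. (hderiv w f (Suc j) t)\<^sup>2 * exp (w * t))
     + integral {..0} (\<lambda>t. (taylor_poly w n f (Suc j) t)\<^sup>2 * exp (w * t))) UNIV"
proof -
  define E where "E = (\<lambda>t. (taylor_ext w n f (Suc j) t)\<^sup>2 * exp (w * t))"
  define R where "R = (\<lambda>t. (hderiv w f (Suc j) t)\<^sup>2 * exp (w * t))"
  define P where "P = (\<lambda>t. (taylor_poly w n f (Suc j) t)\<^sup>2 * exp (w * t))"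
  have "(R has_integral integral {0..} R) {0..}"
    unfolding R_def by (rule integrable_integral[OF Hder_weighted_square_integrable[OF Dom_hderiv_Hder[OF f j]]])
  moreover have "E x = R x" if "x \<in> {0..} - {0}" for x
    using that unfolding E_def R_def by (simp add: taylor_ext_pos)
  ultimately have right: "(E has_integral integral {0..} R) {0..}"
    using has_integral_spike[OF negligible_sing] by blast
  have "(P has_integral integral {..0} P) {..0}"
    unfolding P_def by (rule integrable_integral[OF taylor_poly_weighted_square_integrable[OF w]])
  moreover have "E x = P x" if "x \<in> {..0}" for x
    using that unfolding E_def P_def by (simp add: taylor_ext_nonpos)
  ultimately have left: "(E has_integral integral {..0} P) {..0}"
    using has_integral_cong by blast
  have "{0..} \<inter> {..0::real} = {0}" by auto
  then have "negligible ({0..} \<inter> {..0::real})" by simp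
  moreover have "{0..} \<union> {..0::real} = UNIV" by auto
  ultimately show ?thesis
    using has_integral_Un[OF right left] unfolding E_def R_def P_def by metis
qed

lemma taylor_ext_Hder:
  assumes f: "Dom w {0..} n f" and j: "j \<le> n" and w: "0 < w"
  shows "Hder w UNIV (taylor_ext w n f j) (taylor_ext w n f (Suc j))"
  unfolding Hder_def
proof (intro conjI ballI impI)
  fix x y :: real assume xy: "x \<le> y"
  show "taylor_ext w n f (Suc j) absolutely_integrable_on {x..y}"
    by (rule taylor_ext_has_integral(2)[OF f j xy])
  show "taylor_ext w n f j y - taylor_ext w n f j x = integral {x..y} (taylor_ext w n f (Suc j))"
    using integral_unique[OF taylor_ext_has_integral(1)[OF f j xy]] by simp
next
  show "(\<lambda>x. (taylor_ext w n f (Suc j) x)\<^sup>2 * exp (w * x)) integrable_on UNIV"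
    using taylor_ext_weighted_square_has_integral[OF f j w] by (rule has_integral_integrable)
qed

lemma Aop_pow_taylor_ext:
  assumes f: "Dom w {0..} n f" and w: "0 < w"
  shows "j \<le> n \<Longrightarrow> (Aop w UNIV ^^ j) (taylor_ext w n f 0) = taylor_ext w n f j"
proof (induction j)
  case (Suc j)
  have H: "Hder w UNIV (taylor_ext w n f j) (taylor_ext w n f (Suc j))"
    using Suc.prems by (intro taylor_ext_Hder[OF f _ w]) simp
  have S: "Hsp w UNIV (taylor_ext w n f (Suc j))"
    unfolding Hsp_def using taylor_ext_Hder[OF f Suc.prems w] by blast
  have "Aop w UNIV (taylor_ext w n f j) x = taylor_ext w n f (Suc j) x" for x
    using Hsp_Hder_unique[OF Aop_Hder_Hsp(1)[OF H S] H Aop_Hder_Hsp(2)[OF H S] S, of "x - 1" "x + 1" x] by simp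
  then show ?case using Suc by auto
qed simp

lemma taylor_ext_eq_nonneg: "0 \<le> x \<Longrightarrow> taylor_ext w n f 0 x = f x"
  by (cases "x = 0") (simp_all add: taylor_ext_def taylor_poly_at_0)

lemma Lim_taylor_ext: "Lim at_top (taylor_ext w n f 0) = Lim at_top f"
  by (rule Lim_cong[OF eventually_at_top_linorderI[of 0] refl]) (simp add: taylor_ext_eq_nonneg)

lemma taylor_ext_cong:
  assumes "\<And>x. 0 \<le> x \<Longrightarrow> f x = g x"
  shows "taylor_ext w n f 0 = taylor_ext w n g 0"
proof
  fix x
  have "hderiv w f i 0 = hderiv w g i 0" for i using hderiv_cong[OF assms, where x=0] by simp
  then show "taylor_ext w n f 0 x = taylor_ext w n g 0 x"
    using assms[of x] by (simp add: taylor_ext_def taylor_poly_def)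
qed

lemma taylor_ext_lincomb:
  assumes f: "Dom w {0..} n f" and g: "Dom w {0..} n g"
  shows "taylor_ext w n (\<lambda>x. a * f x + b * g x) 0 = (\<lambda>x. a * taylor_ext w n f 0 x + b * taylor_ext w n g 0 x)"
proof
  fix x
  have "taylor_poly w n (\<lambda>x. a * f x + b * g x) 0 x
      = (\<Sum>i<Suc n. a * (hderiv w f i 0 * x^i / fact i) + b * (hderiv w g i 0 * x^i / fact i))"
    unfolding taylor_poly_def diff_zero add_0
  proof (intro sum.cong refl)
    fix i assume "i \<in> {..<Suc n}"
    then show "hderiv w (\<lambda>x. a * f x + b * g x) i 0 * x ^ i / fact i
        = a * (hderiv w f i 0 * x ^ i / fact i) + b * (hderiv w g i 0 * x ^ i / fact i)"
      using hderiv_lincomb[OF f g, of i 0 a b] by (simp add: add_divide_distrib distrib_right)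
  qed
  also have "\<dots> = a * taylor_poly w n f 0 x + b * taylor_poly w n g 0 x"
    unfolding taylor_poly_def diff_zero add_0 by (simp only: sum.distrib sum_distrib_left)
  finally show "taylor_ext w n (\<lambda>x. a * f x + b * g x) 0 x = a * taylor_ext w n f 0 x + b * taylor_ext w n g 0 x"
    by (simp add: taylor_ext_def)
qed

section \<open>Boundedness of the Taylor extension\<close>

lemma taylor_poly_weighted_square_integral_le:
  assumes w: "0 < w" and s: "0 \<le> s" and bound: "\<And>k. k \<le> n \<Longrightarrow> \<bar>hderiv w f k 0\<bar> \<le> s"
  shows "integral {..0} (\<lambda>x. (taylor_poly w n f j x)\<^sup>2 * exp (w * x))
    \<le> (real (Suc n) * s)\<^sup>2 * integral {..0} (\<lambda>x. (1 + \<bar>x\<bar> ^ n)\<^sup>2 * exp (w * x))"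
proof -
  have coeffs: "(\<Sum>i<Suc n - j. \<bar>hderiv w f (j + i) 0\<bar>) \<le> real (Suc n) * s"
  proof -
    have "(\<Sum>i<Suc n - j. \<bar>hderiv w f (j + i) 0\<bar>) \<le> (\<Sum>i<Suc n - j. s)"
      by (rule sum_mono) (rule bound; auto)
    also have "\<dots> \<le> real (Suc n) * s" using s by (simp add: mult_right_mono)
    finally show ?thesis .
  qed
  have "(taylor_poly w n f j x)\<^sup>2 * exp (w * x) \<le> (real (Suc n) * s)\<^sup>2 * ((1 + \<bar>x\<bar> ^ n)\<^sup>2 * exp (w * x))" for x
  proof -
    have "\<bar>taylor_poly w n f j x\<bar> \<le> (real (Suc n) * s) * (1 + \<bar>x\<bar> ^ n)"
      using abs_taylor_poly_le[of w n f j x] mult_right_mono[OF coeffs, of "1 + \<bar>x\<bar> ^ n"] by simp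
    then have "\<bar>taylor_poly w n f j x\<bar>\<^sup>2 \<le> ((real (Suc n) * s) * (1 + \<bar>x\<bar> ^ n))\<^sup>2"
      by (intro power_mono) auto
    then show ?thesis by (simp add: power_mult_distrib mult.assoc mult_right_mono)
  qed
  then have "integral {..0} (\<lambda>x. (taylor_poly w n f j x)\<^sup>2 * exp (w * x))
      \<le> integral {..0} (\<lambda>x. (real (Suc n) * s)\<^sup>2 * ((1 + \<bar>x\<bar> ^ n)\<^sup>2 * exp (w * x)))"
    by (intro integral_le taylor_poly_weighted_square_integrable[OF w]
        integrable_on_mult_right[OF poly_weight_integrable_nonpos[OF w]])
  then show ?thesis by simp
qed

lemma Hnorm2_Aop_pow_taylor_ext_le:
  assumes f: "Dom w {0..} n f" and j: "j \<le> n" and w: "0 < w"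
    and s: "0 \<le> s" and bound: "\<And>k. k \<le> n \<Longrightarrow> \<bar>hderiv w f k 0\<bar> \<le> s"
  shows "Hnorm2 w UNIV ((Aop w UNIV ^^ j) (taylor_ext w n f 0))
    \<le> Hnorm2 w {0..} (hderiv w f j) + (real (Suc n) * s)\<^sup>2 * integral {..0} (\<lambda>x. (1 + \<bar>x\<bar> ^ n)\<^sup>2 * exp (w * x))"
proof -
  have HE: "Hder w UNIV (taylor_ext w n f j) (taylor_ext w n f (Suc j))" by (rule taylor_ext_Hder[OF f j w])
  then have HA: "Hder w UNIV (taylor_ext w n f j) (Aop w UNIV (taylor_ext w n f j))"
    by (intro Aop_Hder) (auto simp: Hsp_def)
  text \<open>For \<open>j = n\<close> the derivative \<open>taylor_ext w n f (Suc n)\<close> need not lie in \<open>H\<close>, so \<open>Aop\<close> may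
    choose another weak derivative; the two agree almost everywhere.\<close>
  have "integral UNIV (\<lambda>x. (Aop w UNIV (taylor_ext w n f j) x)\<^sup>2 * exp (w * x))
      = integral UNIV (\<lambda>x. (taylor_ext w n f (Suc j) x)\<^sup>2 * exp (w * x))"
    by (rule integral_spike[OF Hder_unique_AE[OF HA HE]]) auto
  also have "\<dots> = integral {0..} (\<lambda>x. (hderiv w f (Suc j) x)\<^sup>2 * exp (w * x))
      + integral {..0} (\<lambda>x. (taylor_poly w n f (Suc j) x)\<^sup>2 * exp (w * x))"
    by (rule integral_unique[OF taylor_ext_weighted_square_has_integral[OF f j w]])
  finally have "Hnorm2 w UNIV (taylor_ext w n f j)
      = Hnorm2 w {0..} (hderiv w f j) + integral {..0} (\<lambda>x. (taylor_poly w n f (Suc j) x)\<^sup>2 * exp (w * x))"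
    using Lim_cong[OF eventually_at_top_linorderI[of 1] refl, of "taylor_ext w n f j" "hderiv w f j"]
    by (simp add: Hnorm2_def hderiv_Suc taylor_ext_pos)
  then show ?thesis
    using taylor_poly_weighted_square_integral_le[OF w s bound] Aop_pow_taylor_ext[OF f w j] by simp
qed

lemma taylor_ext_bounded:
  assumes w: "0 < w"
  shows "\<exists>C. \<forall>f. Dom w {0..} n f \<longrightarrow> gnorm w UNIV n (taylor_ext w n f 0) \<le> C * gnorm w {0..} n f"
proof -
  define q where "q = integral {..0} (\<lambda>x. (1 + \<bar>x\<bar> ^ n)\<^sup>2 * exp (w * x))"
  define K where "K = real (Suc n) * (real (Suc n))\<^sup>2 * (2 + 2 / w) * q"
  have "gnorm w UNIV n (taylor_ext w n f 0) \<le> sqrt (1 + K) * gnorm w {0..} n f"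
    if f: "Dom w {0..} n f" for f
  proof -
    define T where "T = (\<Sum>j\<le>n. Hnorm2 w {0..} (hderiv w f j))"
    define s where "s = sqrt ((2 + 2 / w) * T)"
    have T_nonneg: "0 \<le> T" unfolding T_def by (intro sum_nonneg Hnorm2_nonneg)
    have bound: "\<bar>hderiv w f k 0\<bar> \<le> s" if k: "k \<le> n" for k
    proof -
      have "Hnorm2 w {0..} (hderiv w f k) \<le> T"
        unfolding T_def using k by (intro member_le_sum Hnorm2_nonneg) auto
      then have "(hderiv w f k 0)\<^sup>2 \<le> (2 + 2 / w) * T"
        using hderiv_at_0_sq_le[OF f k w] w by (smt (verit) mult_left_mono divide_nonneg_pos)
      then show ?thesis unfolding s_def using real_sqrt_le_mono by fastforce
    qed
    have "(\<Sum>j\<le>n. Hnorm2 w UNIV ((Aop w UNIV ^^ j) (taylor_ext w n f 0)))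
        \<le> (\<Sum>j\<le>n. Hnorm2 w {0..} (hderiv w f j) + (real (Suc n) * s)\<^sup>2 * q)"
      unfolding q_def using T_nonneg w
      by (intro sum_mono Hnorm2_Aop_pow_taylor_ext_le[OF f _ w _ bound]) (auto simp: s_def)
    also have "\<dots> = T + real (Suc n) * ((real (Suc n))\<^sup>2 * s\<^sup>2 * q)"
      unfolding T_def by (simp add: sum.distrib power_mult_distrib)
    also have "s\<^sup>2 = (2 + 2 / w) * T" unfolding s_def using T_nonneg w by simp
    also have "T + real (Suc n) * ((real (Suc n))\<^sup>2 * ((2 + 2 / w) * T) * q) = (1 + K) * T"
      unfolding K_def by (simp add: algebra_simps add_divide_distrib)
    finally show ?thesis
      unfolding gnorm_def T_def[symmetric] hderiv_def[symmetric]
      by (metis real_sqrt_le_mono real_sqrt_mult)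
  qed
  then show ?thesis by blast
qed

theorem lemma5p7:
  fixes w :: real and m :: nat
  assumes "w > 0" and "m > 0"
  shows "\<exists>L :: (real \<Rightarrow> real) \<Rightarrow> (real \<Rightarrow> real).
     (\<forall>f. Dom w {0..} (2*m) f \<longrightarrow> Dom w UNIV (2*m) (L f))
   \<and> (\<forall>f g. Dom w {0..} (2*m) f \<longrightarrow> Dom w {0..} (2*m) g \<longrightarrow> (\<forall>x\<ge>0. f x = g x) \<longrightarrow> L f = L g)
   \<and> (\<forall>f g. Dom w {0..} (2*m) f \<longrightarrow> Dom w {0..} (2*m) g \<longrightarrow> L (\<lambda>x. f x + g x) = (\<lambda>x. L f x + L g x))
   \<and> (\<forall>c f. Dom w {0..} (2*m) f \<longrightarrow> L (\<lambda>x. c * f x) = (\<lambda>x. c * L f x))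
   \<and> (\<exists>C. \<forall>f. Dom w {0..} (2*m) f \<longrightarrow> gnorm w UNIV (2*m) (L f) \<le> C * gnorm w {0..} (2*m) f)
   \<and> (\<forall>f. Dom w {0..} (2*m) f \<longrightarrow> (\<forall>x\<ge>0. L f x = f x) \<and> Lim at_top (L f) = Lim at_top f)"
proof (intro exI[of _ "\<lambda>f. taylor_ext w (2*m) f 0"] conjI allI impI)
  fix f assume f: "Dom w {0..} (2*m) f"
  show "Dom w UNIV (2*m) (taylor_ext w (2*m) f 0)"
    unfolding Dom_def Hsp_def using Aop_pow_taylor_ext[OF f assms(1)] taylor_ext_Hder[OF f _ assms(1)] by auto
  fix g assume g: "Dom w {0..} (2*m) g"
  show "taylor_ext w (2*m) (\<lambda>x. f x + g x) 0 = (\<lambda>x. taylor_ext w (2*m) f 0 x + taylor_ext w (2*m) g 0 x)"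
    using taylor_ext_lincomb[OF f g, of 1 1] by simp
next
  fix c f assume f: "Dom w {0..} (2*m) f"
  show "taylor_ext w (2*m) (\<lambda>x. c * f x) 0 = (\<lambda>x. c * taylor_ext w (2*m) f 0 x)"
    using taylor_ext_lincomb[OF f f, of c 0] by simp
qed (auto intro: taylor_ext_cong taylor_ext_bounded[OF assms(1)] simp: taylor_ext_eq_nonneg Lim_taylor_ext)

end
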